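(* Let $A$ be a nonempty finite set, $\Sigma\in\mathbb{R}$, and let $\sigma$ be a $\Sigma$-proximity on $A$. Then for all $x,y\in A$: $\sigma(x,y)=\sigma(y,x)$ (symmetry), and if $x\ne y$ then $\sigma(x,x)>\sigma(x,y)$ (egocentrism).
   Context: For a nonempty finite set $A$ and a real number $\Sigma$, a function $\sigma:A^2\to\mathbb{R}$ is called a $\Sigma$-proximity on $A$ if for all $x,y,z\in A$: (1) (normalization) $\sum_{t\in A}\sigma(x,t)=\Sigma$; (2) (triangle inequality) $\sigma(x,y)+\sigma(x,z)-\sigma(y,z)\le\sigma(x,x)$, and this inequality is strict whenever $z=y$ and $x\ne y$. *)

theory Defs
  imports Main "HOL.Real"
begin

definition proximity :: "'a set \<Rightarrow> real \<Rightarrow> ('a \<Rightarrow> 'a \<Rightarrow> real) \<Rightarrow> bool" where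
  "proximity A \<Sigma> \<sigma> \<longleftrightarrow>
     (\<forall>x\<in>A. (\<Sum>t\<in>A. \<sigma> x t) = \<Sigma>) \<and>
     (\<forall>x\<in>A. \<forall>y\<in>A. \<forall>z\<in>A. \<sigma> x y + \<sigma> x z - \<sigma> y z \<le> \<sigma> x x) \<and>
     (\<forall>x\<in>A. \<forall>y\<in>A. x \<noteq> y \<longrightarrow> \<sigma> x y + \<sigma> x y - \<sigma> y y < \<sigma> x x)"

end

theory Submission
  imports Defs
begin

text \<open>Symmetry is the triangle inequality at the triples (x, y, x) and (y, x, y). For egocentrism
  sum the slack \<sigma>(x,x) - \<sigma>(x,y) - \<sigma>(x,z) + \<sigma>(y,z) of the triangle inequality over z \<in> A:
  every term is nonnegative and the term z = y is positive, while by normalization the two row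
  sums cancel, so the total is |A| (\<sigma>(x,x) - \<sigma>(x,y)).\<close>

lemma proximity_row_sum:
  "proximity A \<Sigma> \<sigma> \<Longrightarrow> x \<in> A \<Longrightarrow> (\<Sum>t\<in>A. \<sigma> x t) = \<Sigma>"
  unfolding proximity_def by blast

lemma proximity_triangle:
  "proximity A \<Sigma> \<sigma> \<Longrightarrow> x \<in> A \<Longrightarrow> y \<in> A \<Longrightarrow> z \<in> A \<Longrightarrow> \<sigma> x y + \<sigma> x z - \<sigma> y z \<le> \<sigma> x x"
  unfolding proximity_def by blast

lemma proximity_triangle_strict:
  "proximity A \<Sigma> \<sigma> \<Longrightarrow> x \<in> A \<Longrightarrow> y \<in> A \<Longrightarrow> x \<noteq> y \<Longrightarrow> \<sigma> x y + \<sigma> x y - \<sigma> y y < \<sigma> x x"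
  unfolding proximity_def by blast

lemma proximity_sym:
  assumes "proximity A \<Sigma> \<sigma>" and "x \<in> A" and "y \<in> A"
  shows "\<sigma> x y = \<sigma> y x"
  using proximity_triangle[OF assms(1,2,3,2)] proximity_triangle[OF assms(1,3,2,3)] by linarith

lemma proximity_egocentric:
  assumes prox: "proximity A \<Sigma> \<sigma>" and "finite A"
    and x: "x \<in> A" and y: "y \<in> A" and "x \<noteq> y"
  shows "\<sigma> x y < \<sigma> x x"
proof -
  define slack where "slack z = \<sigma> x x - \<sigma> x y - \<sigma> x z + \<sigma> y z" for z
  have "0 < sum slack A"
  proof (rule sum_pos2[OF \<open>finite A\<close> y])
    show "0 < slack y"
      using proximity_triangle_strict[OF prox x y \<open>x \<noteq> y\<close>] unfolding slack_def by linarith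
    show "0 \<le> slack z" if "z \<in> A" for z
      using proximity_triangle[OF prox x y that] unfolding slack_def by linarith
  qed
  also have "sum slack A = real (card A) * (\<sigma> x x - \<sigma> x y) - (\<Sum>t\<in>A. \<sigma> x t) + (\<Sum>t\<in>A. \<sigma> y t)"
    unfolding slack_def by (simp add: sum.distrib sum_subtractf)
  also have "\<dots> = real (card A) * (\<sigma> x x - \<sigma> x y)"
    using proximity_row_sum[OF prox x] proximity_row_sum[OF prox y] by simp
  finally show ?thesis
    by (simp add: zero_less_mult_iff)
qed

theorem proposition1:
  fixes A :: "'a set" and \<Sigma> :: real and \<sigma> :: "'a \<Rightarrow> 'a \<Rightarrow> real"
  assumes "finite A" and "A \<noteq> {}" and "proximity A \<Sigma> \<sigma>"
  shows "\<forall>x\<in>A. \<forall>y\<in>A. \<sigma> x y = \<sigma> y x \<and> (x \<noteq> y \<longrightarrow> \<sigma> x x > \<sigma> x y)"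
  using proximity_sym[OF assms(3)] proximity_egocentric[OF assms(3,1)] by blast

end
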